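(* Let $f_0,f_1$ be finitely supported probability distributions on a connected, locally finite graph $G$. Let $\gamma^{(1)},\gamma^{(2)}$ be geodesics in $G$ such that $(e_0(\gamma^{(i)}),e_1(\gamma^{(i)}))\in\mathcal{C}(f_0,f_1)$ for $i=1,2$. Then there are no integers $k_1,k_2$ with $0\le k_i\le L(\gamma^{(i)})-1$ such that both $\gamma^{(1)}(k_1)=\gamma^{(2)}(k_2+1)$ and $\gamma^{(1)}(k_1+1)=\gamma^{(2)}(k_2)$.
   Context: $d$ is the graph distance of $G$. A path of length $n$ is a sequence of vertices $\gamma(0),\dots,\gamma(n)$ with $\gamma(i),\gamma(i+1)$ adjacent; $L(\gamma)=n$, $e_0(\gamma)=\gamma(0)$, $e_1(\gamma)=\gamma(n)$; it is a geodesic if $n=d(\gamma(0),\gamma(n))$. A probability distribution is a function $f:G\to[0,\infty)$ with $\sum_x f(x)=1$. $\Pi(f_0,f_1)$ is the set of couplings ($\pi:G\times G\to[0,\infty)$ with marginals $f_0,f_1$), $\Pi_1(f_0,f_1)$ the set of couplings minimizing $\sum_{x,y}d(x,y)\pi(x,y)$, and $\mathcal{C}(f_0,f_1)=\{(x,y)\in G\times G:\pi(x,y)>0\text{ for some }\pi\in\Pi_1(f_0,f_1)\}$. *)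

theory Defs
  imports "HOL-Analysis.Analysis"
begin

definition graph :: "('v \<Rightarrow> 'v \<Rightarrow> bool) \<Rightarrow> bool" where
  "graph E \<longleftrightarrow> (\<forall>x y. E x y \<longrightarrow> E y x) \<and> (\<forall>x. \<not> E x x)"

definition is_path :: "('v \<Rightarrow> 'v \<Rightarrow> bool) \<Rightarrow> (nat \<Rightarrow> 'v) \<Rightarrow> nat \<Rightarrow> bool" where
  "is_path E g n \<longleftrightarrow> (\<forall>i<n. E (g i) (g (Suc i)))"

definition connected_graph :: "('v \<Rightarrow> 'v \<Rightarrow> bool) \<Rightarrow> bool" where
  "connected_graph E \<longleftrightarrow> (\<forall>x y. \<exists>g n. is_path E g n \<and> g 0 = x \<and> g n = y)"

definition locally_finite :: "('v \<Rightarrow> 'v \<Rightarrow> bool) \<Rightarrow> bool" where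
  "locally_finite E \<longleftrightarrow> (\<forall>x. finite {y. E x y})"

definition gdist :: "('v \<Rightarrow> 'v \<Rightarrow> bool) \<Rightarrow> 'v \<Rightarrow> 'v \<Rightarrow> nat" where
  "gdist E x y = (LEAST n. \<exists>g. is_path E g n \<and> g 0 = x \<and> g n = y)"

definition geodesic :: "('v \<Rightarrow> 'v \<Rightarrow> bool) \<Rightarrow> (nat \<Rightarrow> 'v) \<Rightarrow> nat \<Rightarrow> bool" where
  "geodesic E g n \<longleftrightarrow> is_path E g n \<and> n = gdist E (g 0) (g n)"

definition prob_dist :: "('v \<Rightarrow> real) \<Rightarrow> bool" where
  "prob_dist f \<longleftrightarrow> (\<forall>x. 0 \<le> f x) \<and> (f has_sum 1) UNIV"

definition fin_supp :: "('v \<Rightarrow> real) \<Rightarrow> bool" where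
  "fin_supp f \<longleftrightarrow> finite {x. f x \<noteq> 0}"

definition couplings :: "('v \<Rightarrow> real) \<Rightarrow> ('v \<Rightarrow> real) \<Rightarrow> ('v \<times> 'v \<Rightarrow> real) set" where
  "couplings f0 f1 = {p. (\<forall>z. 0 \<le> p z)
      \<and> (\<forall>x. ((\<lambda>y. p (x, y)) has_sum f0 x) UNIV)
      \<and> (\<forall>y. ((\<lambda>x. p (x, y)) has_sum f1 y) UNIV)}"

definition tcost :: "('v \<Rightarrow> 'v \<Rightarrow> bool) \<Rightarrow> ('v \<times> 'v \<Rightarrow> real) \<Rightarrow> real" where
  "tcost E p = (\<Sum>\<^sub>\<infinity>z. real (gdist E (fst z) (snd z)) * p z)"

definition opt_couplings :: "('v \<Rightarrow> 'v \<Rightarrow> bool) \<Rightarrow> ('v \<Rightarrow> real) \<Rightarrow> ('v \<Rightarrow> real) \<Rightarrow> ('v \<times> 'v \<Rightarrow> real) set" where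
  "opt_couplings E f0 f1 = {p \<in> couplings f0 f1. \<forall>q \<in> couplings f0 f1. tcost E p \<le> tcost E q}"

definition opt_support :: "('v \<Rightarrow> 'v \<Rightarrow> bool) \<Rightarrow> ('v \<Rightarrow> real) \<Rightarrow> ('v \<Rightarrow> real) \<Rightarrow> ('v \<times> 'v) set" where
  "opt_support E f0 f1 = {(x, y). \<exists>p \<in> opt_couplings E f0 f1. 0 < p (x, y)}"

end

theory Submission
  imports Defs
begin

text \<open>If the geodesics from x1 to y1 and from x2 to y2 traverse a common edge in opposite
  directions, then following the first up to that edge and the second after it (and vice versa)
  gives paths from x1 to y2 and from x2 to y1 whose total length is shorter by 2, since the edge
  itself is dropped twice. Hence d(x1,y2) + d(x2,y1) < d(x1,y1) + d(x2,y2). On the other hand, the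
  support of optimal couplings is cyclically monotone: if both (x1,y1) and (x2,y2) carry mass in
  optimal couplings, moving a small mass e from (x1,y1),(x2,y2) to (x1,y2),(x2,y1) in the average of
  the two couplings keeps the marginals and changes the cost by
  e (d(x1,y2) + d(x2,y1) - d(x1,y1) - d(x2,y2)), which must therefore be nonnegative.\<close>

lemma is_path_append:
  assumes "is_path E a m" "is_path E b l" "a m = b 0"
  shows "is_path E (\<lambda>i. if i \<le> m then a i else b (i - m)) (m + l)"
  unfolding is_path_def
proof (intro allI impI)
  fix i assume i: "i < m + l"
  show "E (if i \<le> m then a i else b (i - m)) (if Suc i \<le> m then a (Suc i) else b (Suc i - m))"
  proof (cases "i < m")
    case True then show ?thesis using assms(1) unfolding is_path_def by auto
  next
    case False
    then have "i - m < l" "Suc i - m = Suc (i - m)" using i by auto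
    then show ?thesis using assms False unfolding is_path_def
      by (cases "i = m") auto
  qed
qed

lemma is_path_prefix: "is_path E g n \<Longrightarrow> k \<le> n \<Longrightarrow> is_path E g k"
  unfolding is_path_def by auto

lemma is_path_suffix: "is_path E g n \<Longrightarrow> is_path E (\<lambda>t. g (j + t)) (n - j)"
  unfolding is_path_def by auto

lemma gdist_le_path_length: "is_path E g n \<Longrightarrow> gdist E (g 0) (g n) \<le> n"
  unfolding gdist_def by (intro Least_le) blast

lemma gdist_le_via_common_vertex:
  assumes "is_path E g1 n1" "is_path E g2 n2" "k \<le> n1" "j \<le> n2" "g1 k = g2 j"
  shows "gdist E (g1 0) (g2 n2) \<le> k + (n2 - j)"
proof -
  define c where "c = (\<lambda>i. if i \<le> k then g1 i else g2 (j + (i - k)))"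
  have "is_path E c (k + (n2 - j))"
    unfolding c_def using is_path_append[OF is_path_prefix[OF assms(1,3)] is_path_suffix[OF assms(2)]]
      assms(5) by simp
  moreover have "c 0 = g1 0" "c (k + (n2 - j)) = g2 n2"
    using assms(4,5) by (auto simp: c_def dest: le_antisym)
  ultimately show ?thesis using gdist_le_path_length by metis
qed

lemma gdist_swap_less_of_reverse_crossing:
  assumes "geodesic E g1 n1" "geodesic E g2 n2" "k1 < n1" "k2 < n2"
    and "g1 k1 = g2 (Suc k2)" "g1 (Suc k1) = g2 k2"
  shows "gdist E (g1 0) (g2 n2) + gdist E (g2 0) (g1 n1)
           < gdist E (g1 0) (g1 n1) + gdist E (g2 0) (g2 n2)"
proof -
  have paths: "is_path E g1 n1" "is_path E g2 n2"
    using assms(1,2) unfolding geodesic_def by auto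
  have "gdist E (g1 0) (g2 n2) \<le> k1 + (n2 - Suc k2)"
    using gdist_le_via_common_vertex[OF paths] assms(3-5) by simp
  moreover have "gdist E (g2 0) (g1 n1) \<le> k2 + (n1 - Suc k1)"
    using gdist_le_via_common_vertex[OF paths(2,1)] assms(3,4,6) by simp
  moreover have "n1 = gdist E (g1 0) (g1 n1)" "n2 = gdist E (g2 0) (g2 n2)"
    using assms(1,2) unfolding geodesic_def by auto
  ultimately show ?thesis using assms(3,4) by linarith
qed

lemma has_sum_nonneg_term_le:
  fixes f :: "'a \<Rightarrow> real"
  assumes "(f has_sum s) UNIV" "\<And>x. 0 \<le> f x"
  shows "f y \<le> s"
proof -
  have "(f has_sum f y) {y}" using has_sum_finite[of "{y}" f] by simp
  from has_sum_mono_neutral[OF this assms(1)] assms(2) show ?thesis by auto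
qed

lemma couplings_nonneg: "p \<in> couplings f0 f1 \<Longrightarrow> 0 \<le> p z"
  unfolding couplings_def by (cases z) auto

lemma coupling_support_subset:
  assumes "p \<in> couplings f0 f1"
  shows "{z. p z \<noteq> 0} \<subseteq> {x. f0 x \<noteq> 0} \<times> {y. f1 y \<noteq> 0}"
proof safe
  fix x y assume "p (x, y) \<noteq> 0"
  then have pos: "0 < p (x, y)" using couplings_nonneg[OF assms] by (metis less_eq_real_def)
  have "p (x, y) \<le> f0 x" "p (x, y) \<le> f1 y"
    using has_sum_nonneg_term_le[of "\<lambda>y. p (x, y)" "f0 x" y]
      has_sum_nonneg_term_le[of "\<lambda>x. p (x, y)" "f1 y" x] assms
    unfolding couplings_def by auto
  with pos show "f0 x = 0 \<Longrightarrow> False" "f1 y = 0 \<Longrightarrow> False" by auto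
qed

lemma coupling_finite_support:
  assumes "p \<in> couplings f0 f1" "fin_supp f0" "fin_supp f1"
  shows "finite {z. p z \<noteq> 0}"
  using coupling_support_subset[OF assms(1)] assms(2,3) unfolding fin_supp_def
  by (auto intro: finite_subset)

lemma tcost_has_sum:
  assumes "p \<in> couplings f0 f1" "fin_supp f0" "fin_supp f1"
  shows "((\<lambda>z. real (gdist E (fst z) (snd z)) * p z) has_sum tcost E p) UNIV"
proof -
  have "(\<lambda>z. real (gdist E (fst z) (snd z)) * p z) summable_on UNIV"
    by (rule summable_on_cong_neutral[where S="{z. p z \<noteq> 0}", THEN iffD1])
       (use coupling_finite_support[OF assms] in auto)
  then show ?thesis unfolding tcost_def by simp
qed

lemma couplings_convex:
  assumes "p \<in> couplings f0 f1" "q \<in> couplings f0 f1" "0 \<le> t" "t \<le> 1"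
  shows "(\<lambda>z. (1 - t) * p z + t * q z) \<in> couplings f0 f1"
proof -
  have mix: "((\<lambda>a. (1 - t) * h a + t * k a) has_sum s) UNIV"
    if "(h has_sum s) UNIV" "(k has_sum s) UNIV" for h k :: "'c \<Rightarrow> real" and s
    using has_sum_add[OF has_sum_cmult_right[OF that(1), of "1 - t"] has_sum_cmult_right[OF that(2), of t]]
    by (simp add: algebra_simps)
  show ?thesis
    using assms couplings_nonneg[OF assms(1)] couplings_nonneg[OF assms(2)]
    unfolding couplings_def by (auto intro: mix)
qed

lemma tcost_convex:
  assumes "p \<in> couplings f0 f1" "q \<in> couplings f0 f1" "fin_supp f0" "fin_supp f1"
  shows "tcost E (\<lambda>z. (1 - t) * p z + t * q z) = (1 - t) * tcost E p + t * tcost E q"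
proof -
  have "((\<lambda>z. real (gdist E (fst z) (snd z)) * ((1 - t) * p z + t * q z)) has_sum
      (1 - t) * tcost E p + t * tcost E q) UNIV"
    using has_sum_add[OF has_sum_cmult_right[OF tcost_has_sum[OF assms(1,3,4)], of "1 - t"]
        has_sum_cmult_right[OF tcost_has_sum[OF assms(2,3,4)], of t]]
    by (simp add: algebra_simps)
  then show ?thesis unfolding tcost_def[of E "\<lambda>z. (1 - t) * p z + t * q z"] by (rule infsumI)
qed

lemma has_sum_diff:
  fixes f g :: "'a \<Rightarrow> real"
  assumes "(f has_sum a) A" "(g has_sum b) A"
  shows "((\<lambda>x. f x - g x) has_sum (a - b)) A"
  using has_sum_add[OF assms(1) has_sum_uminus[THEN iffD1, of "\<lambda>x. - g x"]] assms(2) by simp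

definition swap_perturbation :: "'a \<Rightarrow> 'b \<Rightarrow> 'a \<Rightarrow> 'b \<Rightarrow> 'a \<times> 'b \<Rightarrow> real" where
  "swap_perturbation x1 y1 x2 y2 z =
     of_bool (z = (x1, y2)) + of_bool (z = (x2, y1)) - of_bool (z = (x1, y1)) - of_bool (z = (x2, y2))"

lemma has_sum_row_of_bool_eq: "((\<lambda>y. of_bool ((x, y) = (u, v)) :: real) has_sum of_bool (x = u)) UNIV"
  by (rule has_sum_finite_neutralI[where B="{v}"]) auto

lemma has_sum_col_of_bool_eq: "((\<lambda>x. of_bool ((x, y) = (u, v)) :: real) has_sum of_bool (y = v)) UNIV"
  by (rule has_sum_finite_neutralI[where B="{u}"]) auto

lemma has_sum_weighted_of_bool_eq: "((\<lambda>z. w z * of_bool (z = a) :: real) has_sum w a) UNIV"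
  by (rule has_sum_finite_neutralI[where B="{a}"]) auto

lemma swap_perturbation_row_has_sum:
  "((\<lambda>y. swap_perturbation x1 y1 x2 y2 (x, y)) has_sum 0) UNIV"
proof -
  have "((\<lambda>y. swap_perturbation x1 y1 x2 y2 (x, y)) has_sum
      of_bool (x = x1) + of_bool (x = x2) - of_bool (x = x1) - of_bool (x = x2)) UNIV"
    unfolding swap_perturbation_def by (intro has_sum_diff has_sum_add has_sum_row_of_bool_eq)
  then show ?thesis by simp
qed

lemma swap_perturbation_col_has_sum:
  "((\<lambda>x. swap_perturbation x1 y1 x2 y2 (x, y)) has_sum 0) UNIV"
proof -
  have "((\<lambda>x. swap_perturbation x1 y1 x2 y2 (x, y)) has_sum
      of_bool (y = y2) + of_bool (y = y1) - of_bool (y = y1) - of_bool (y = y2)) UNIV"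
    unfolding swap_perturbation_def by (intro has_sum_diff has_sum_add has_sum_col_of_bool_eq)
  then show ?thesis by simp
qed

lemma swap_perturbation_weighted_has_sum:
  "((\<lambda>z. w z * swap_perturbation x1 y1 x2 y2 z) has_sum
      w (x1, y2) + w (x2, y1) - w (x1, y1) - w (x2, y2)) UNIV"
  unfolding swap_perturbation_def distrib_left right_diff_distrib
  by (intro has_sum_diff has_sum_add has_sum_weighted_of_bool_eq)

text \<open>The bound is -1, not -2: if (x1,y1) = (x2,y2), then (x1,y2) is that point too and the
  perturbation vanishes there.\<close>

lemma swap_perturbation_ge:
  "- 1 \<le> swap_perturbation x1 y1 x2 y2 z"
  "z \<notin> {(x1, y1), (x2, y2)} \<Longrightarrow> 0 \<le> swap_perturbation x1 y1 x2 y2 z"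
  by (auto simp: swap_perturbation_def)

lemma couplings_add_swap_perturbation:
  assumes "p \<in> couplings f0 f1" "0 \<le> e" "e \<le> p (x1, y1)" "e \<le> p (x2, y2)"
  shows "(\<lambda>z. p z + e * swap_perturbation x1 y1 x2 y2 z) \<in> couplings f0 f1"
proof -
  have "0 \<le> p z + e * swap_perturbation x1 y1 x2 y2 z" for z
  proof (cases "z \<in> {(x1, y1), (x2, y2)}")
    case True
    then have "e \<le> p z" using assms(3,4) by auto
    moreover have "- e \<le> e * swap_perturbation x1 y1 x2 y2 z"
      using mult_left_mono[OF swap_perturbation_ge(1) assms(2)] by simp
    ultimately show ?thesis by linarith
  next
    case False
    then show ?thesis
      using swap_perturbation_ge(2)[OF False] couplings_nonneg[OF assms(1)] assms(2) by simp
  qed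
  moreover have "((\<lambda>y. p (x, y) + e * swap_perturbation x1 y1 x2 y2 (x, y)) has_sum f0 x) UNIV" for x
    using has_sum_add[OF _ has_sum_cmult_right[OF swap_perturbation_row_has_sum]] assms(1)
    unfolding couplings_def by fastforce
  moreover have "((\<lambda>x. p (x, y) + e * swap_perturbation x1 y1 x2 y2 (x, y)) has_sum f1 y) UNIV" for y
    using has_sum_add[OF _ has_sum_cmult_right[OF swap_perturbation_col_has_sum]] assms(1)
    unfolding couplings_def by fastforce
  ultimately show ?thesis unfolding couplings_def by blast
qed

lemma tcost_add_swap_perturbation:
  assumes "p \<in> couplings f0 f1" "fin_supp f0" "fin_supp f1"
  shows "tcost E (\<lambda>z. p z + e * swap_perturbation x1 y1 x2 y2 z)
           = tcost E p + e * (real (gdist E x1 y2) + gdist E x2 y1 - gdist E x1 y1 - gdist E x2 y2)"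
proof -
  have "((\<lambda>z. real (gdist E (fst z) (snd z)) * (p z + e * swap_perturbation x1 y1 x2 y2 z)) has_sum
      tcost E p + e * (real (gdist E x1 y2) + gdist E x2 y1 - gdist E x1 y1 - gdist E x2 y2)) UNIV"
    using has_sum_add[OF tcost_has_sum[OF assms(1-3)] has_sum_cmult_right[OF
        swap_perturbation_weighted_has_sum[of "\<lambda>z. real (gdist E (fst z) (snd z))"], of e]]
    by (simp add: algebra_simps)
  then show ?thesis
    unfolding tcost_def[of E "\<lambda>z. p z + e * swap_perturbation x1 y1 x2 y2 z"] by (rule infsumI)
qed

lemma opt_support_pair_monotone:
  assumes "fin_supp f0" "fin_supp f1"
    and "(x1, y1) \<in> opt_support E f0 f1" "(x2, y2) \<in> opt_support E f0 f1"
  shows "gdist E x1 y1 + gdist E x2 y2 \<le> gdist E x1 y2 + gdist E x2 y1"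
proof (rule ccontr)
  assume "\<not> ?thesis"
  then have shorter: "real (gdist E x1 y2) + gdist E x2 y1 - gdist E x1 y1 - gdist E x2 y2 < 0"
    by linarith
  obtain p1 p2 where opt: "p1 \<in> opt_couplings E f0 f1" "p2 \<in> opt_couplings E f0 f1"
    and pos: "0 < p1 (x1, y1)" "0 < p2 (x2, y2)"
    using assms(3,4) unfolding opt_support_def by auto
  have cpl: "p1 \<in> couplings f0 f1" "p2 \<in> couplings f0 f1"
    using opt unfolding opt_couplings_def by auto
  define p where "p = (\<lambda>z. (1 - 1 / 2) * p1 z + 1 / 2 * p2 z)"
  have p: "p \<in> couplings f0 f1"
    unfolding p_def by (rule couplings_convex[OF cpl]) auto
  have "tcost E p1 \<le> tcost E p2" "tcost E p2 \<le> tcost E p1"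
    using opt cpl unfolding opt_couplings_def by auto
  then have cost_p: "tcost E p = tcost E p1"
    unfolding p_def tcost_convex[OF cpl assms(1,2)] by simp
  define e where "e = min (p (x1, y1)) (p (x2, y2))"
  have "0 < e"
    using pos couplings_nonneg[OF cpl(1)] couplings_nonneg[OF cpl(2)]
    unfolding e_def p_def by (simp add: add_pos_nonneg add_nonneg_pos)
  define q where "q = (\<lambda>z. p z + e * swap_perturbation x1 y1 x2 y2 z)"
  have "q \<in> couplings f0 f1"
    unfolding q_def using \<open>0 < e\<close> by (intro couplings_add_swap_perturbation[OF p]) (auto simp: e_def)
  then have "tcost E p1 \<le> tcost E q"
    using opt unfolding opt_couplings_def by auto
  moreover have "tcost E q < tcost E p"
    unfolding q_def tcost_add_swap_perturbation[OF p assms(1,2)]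
    using mult_pos_neg[OF \<open>0 < e\<close> shorter] by simp
  ultimately show False using cost_p by simp
qed

theorem theorem2p11:
  fixes E :: "'v \<Rightarrow> 'v \<Rightarrow> bool"
    and f0 f1 :: "'v \<Rightarrow> real"
    and g1 g2 :: "nat \<Rightarrow> 'v" and n1 n2 :: nat
  assumes "graph E" and "connected_graph E" and "locally_finite E"
    and "prob_dist f0" and "prob_dist f1" and "fin_supp f0" and "fin_supp f1"
    and "geodesic E g1 n1" and "geodesic E g2 n2"
    and "(g1 0, g1 n1) \<in> opt_support E f0 f1"
    and "(g2 0, g2 n2) \<in> opt_support E f0 f1"
  shows "\<not> (\<exists>k1 k2. k1 < n1 \<and> k2 < n2 \<and>
            g1 k1 = g2 (Suc k2) \<and> g1 (Suc k1) = g2 k2)"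
  \<comment> \<open>Only finiteness of the supports (making all costs finite sums) is used.\<close>
proof
  assume "\<exists>k1 k2. k1 < n1 \<and> k2 < n2 \<and> g1 k1 = g2 (Suc k2) \<and> g1 (Suc k1) = g2 k2"
  then obtain k1 k2 where "k1 < n1" "k2 < n2" "g1 k1 = g2 (Suc k2)" "g1 (Suc k1) = g2 k2"
    by blast
  then have "gdist E (g1 0) (g2 n2) + gdist E (g2 0) (g1 n1)
               < gdist E (g1 0) (g1 n1) + gdist E (g2 0) (g2 n2)"
    using gdist_swap_less_of_reverse_crossing[OF assms(8,9)] by blast
  moreover have "gdist E (g1 0) (g1 n1) + gdist E (g2 0) (g2 n2)
                   \<le> gdist E (g1 0) (g2 n2) + gdist E (g2 0) (g1 n1)"
    by (rule opt_support_pair_monotone[OF assms(6,7,10,11)])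
  ultimately show False by linarith
qed

end
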